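(* Let $A$ be an infinite Boolean algebra and $K$ an infinite compact Hausdorff space. Then $irr(A)\leq nbiort_2(K_A)$ and $nbiort_2(K)\leq s(K^2)$.
   Context: $K_A$ is the Stone space of $A$ (ultrafilters of $A$ with topology generated by $[a]=\{u:a\in u\}$). $irr(A)$ is the supremum of cardinalities of sets $R\subseteq A$ such that no $r\in R$ belongs to the Boolean subalgebra generated by $R\setminus\{r\}$. A nice biorthogonal system in $C(K)$ is a family $(f_\alpha,\delta_{x_\alpha}-\delta_{y_\alpha})_{\alpha<\kappa}$ with $f_\alpha\in C(K)$, $x_\alpha,y_\alpha\in K$, $f_\alpha(x_\alpha)-f_\alpha(y_\alpha)=1$ and $f_\alpha(x_\beta)-f_\alpha(y_\beta)=0$ for $\alpha\ne\beta$; $nbiort_2(K)$ is the supremum of $\kappa$ over nice biorthogonal systems in $C(K)$. $s(Z)$ is the supremum of cardinalities of discrete subspaces of $Z$; $K^2$ has the product topology. *)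

theory Defs
  imports "HOL-Analysis.Analysis"
begin

inductive_set subalg_gen :: "'a::boolean_algebra set \<Rightarrow> 'a set" for S where
  base: "s \<in> S \<Longrightarrow> s \<in> subalg_gen S"
| bot: "bot \<in> subalg_gen S"
| top: "top \<in> subalg_gen S"
| compl: "a \<in> subalg_gen S \<Longrightarrow> - a \<in> subalg_gen S"
| sup: "a \<in> subalg_gen S \<Longrightarrow> b \<in> subalg_gen S \<Longrightarrow> sup a b \<in> subalg_gen S"
| inf: "a \<in> subalg_gen S \<Longrightarrow> b \<in> subalg_gen S \<Longrightarrow> inf a b \<in> subalg_gen S"

definition irredundant :: "'a::boolean_algebra set \<Rightarrow> bool" where
  "irredundant R \<longleftrightarrow> (\<forall>r\<in>R. r \<notin> subalg_gen (R - {r}))"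

definition proper_filter :: "'a::boolean_algebra set \<Rightarrow> bool" where
  "proper_filter F \<longleftrightarrow> top \<in> F \<and> bot \<notin> F \<and>
     (\<forall>a\<in>F. \<forall>b\<in>F. inf a b \<in> F) \<and> (\<forall>a\<in>F. \<forall>b. a \<le> b \<longrightarrow> b \<in> F)"

definition ultrafilter :: "'a::boolean_algebra set \<Rightarrow> bool" where
  "ultrafilter U \<longleftrightarrow> proper_filter U \<and> (\<forall>F. proper_filter F \<and> U \<subseteq> F \<longrightarrow> F = U)"

definition stone_space :: "'a::boolean_algebra set topology" where
  "stone_space = topology_generated_by {{u. ultrafilter u \<and> a \<in> u} | a. True}"

definition nice_biort ::
  "'p topology \<Rightarrow> 'i set \<Rightarrow> ('i \<Rightarrow> 'p \<Rightarrow> real) \<Rightarrow> ('i \<Rightarrow> 'p) \<Rightarrow> ('i \<Rightarrow> 'p) \<Rightarrow> bool" where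
  "nice_biort X I f x y \<longleftrightarrow>
     (\<forall>\<alpha>\<in>I. continuous_map X euclideanreal (f \<alpha>) \<and> x \<alpha> \<in> topspace X \<and> y \<alpha> \<in> topspace X
        \<and> f \<alpha> (x \<alpha>) - f \<alpha> (y \<alpha>) = 1
        \<and> (\<forall>\<beta>\<in>I. \<beta> \<noteq> \<alpha> \<longrightarrow> f \<alpha> (x \<beta>) - f \<alpha> (y \<beta>) = 0))"

text \<open>Index sets of nice biorthogonal systems in C(X). Indices are taken in the type 'p * 'p,
  which is no restriction since distinct indices have distinct pairs (x_alpha, y_alpha).\<close>
definition nbiort_index :: "'p topology \<Rightarrow> ('p \<times> 'p) set \<Rightarrow> bool" where
  "nbiort_index X I \<longleftrightarrow> (\<exists>f x y. nice_biort X I f x y)"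

definition discrete_subspace :: "'p topology \<Rightarrow> 'p set \<Rightarrow> bool" where
  "discrete_subspace Z D \<longleftrightarrow> D \<subseteq> topspace Z \<and> subtopology Z D = discrete_topology D"

text \<open>card_sup_le P Q says: sup{|X| : P X} \<le> sup{|Y| : Q Y}. This unfolds the cardinal
  inequality kappa \<le> sup as: every cardinal lambda < kappa (realised by a subset of X)
  is below some |Y|.\<close>
definition card_sup_le :: "('a set \<Rightarrow> bool) \<Rightarrow> ('b set \<Rightarrow> bool) \<Rightarrow> bool" where
  "card_sup_le P Q \<longleftrightarrow>
     (\<forall>X. P X \<longrightarrow> (\<forall>L. L \<subseteq> X \<longrightarrow> (card_of L, card_of X) \<in> ordLess \<longrightarrow> (\<exists>Y. Q Y \<and> (card_of L, card_of Y) \<in> ordLess)))"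

end

theory Submission
  imports Defs
begin

(* Both inequalities are proved by explicit injections.  Since card_sup_le P Q only asks
   that every cardinal below |X| (for P X) is below |Y| for some Q Y, it suffices to map
   each P-set X injectively onto a Q-set (lemma card_sup_le_by_injection).

   If R is irredundant, then for each r in R the element r
   lies outside the subalgebra generated by R - {r}; by a Zorn/ultrafilter argument there
   are ultrafilters u_r, v_r with r in u_r, r not in v_r, which agree on R - {r}.  The
   indicator functions of the clopen sets [r] together with the pairs (u_r, v_r) form a
   nice biorthogonal system on the Stone space, indexed injectively by R.

   For a nice biorthogonal system, the points (x_a, y_a) of
   K x K are distinct, and the continuous map (s,t) |-> f_a(s) - f_a(t) isolates
   (x_a, y_a) among them (value 1 there, 0 at the others), so they form a discrete subspace.

   Neither argument needs the infinitude, compactness or Hausdorff hypotheses. *)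

lemma card_of_less_inj_image:
  assumes "inj_on p R" "(card_of L, card_of R) \<in> ordLess"
  shows "(card_of L, card_of (p ` R)) \<in> ordLess"
proof -
  have "bij_betw p R (p ` R)" using assms(1) by (simp add: bij_betw_def)
  then have "(card_of R, card_of (p ` R)) \<in> ordIso" using card_of_ordIso by blast
  then show ?thesis using assms(2) ordLess_ordIso_trans by blast
qed

lemma card_sup_le_by_injection:
  assumes "\<And>X. P X \<Longrightarrow> \<exists>p. inj_on p X \<and> Q (p ` X)"
  shows "card_sup_le P Q"
  unfolding card_sup_le_def
proof (intro allI impI)
  fix X L assume "P X" "(card_of L, card_of X) \<in> ordLess"
  moreover obtain p where "inj_on p X" "Q (p ` X)" using assms \<open>P X\<close> by blast
  ultimately show "\<exists>Y. Q Y \<and> (card_of L, card_of Y) \<in> ordLess"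
    using card_of_less_inj_image by blast
qed

lemma proper_filter_generated:
  fixes G :: "'a::boolean_algebra set"
  assumes "G \<noteq> {}" "\<And>g h. g \<in> G \<Longrightarrow> h \<in> G \<Longrightarrow> inf g h \<in> G"
    "\<And>g. g \<in> G \<Longrightarrow> inf g c \<noteq> bot"
  shows "proper_filter {x. \<exists>g\<in>G. inf g c \<le> x}"
  unfolding proper_filter_def
proof (intro conjI ballI allI impI)
  show "top \<in> {x. \<exists>g\<in>G. inf g c \<le> x}" using assms(1) by auto
  show "bot \<notin> {x. \<exists>g\<in>G. inf g c \<le> x}" using assms(3) bot_unique by auto
  fix a b assume "a \<in> {x. \<exists>g\<in>G. inf g c \<le> x}"
  then obtain g where g: "g \<in> G" "inf g c \<le> a" by auto
  { assume "b \<in> {x. \<exists>g\<in>G. inf g c \<le> x}"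
    then obtain h where h: "h \<in> G" "inf h c \<le> b" by auto
    have "inf (inf g h) c \<le> inf a b" using g h
      by (meson inf.cobounded1 inf.cobounded2 inf_mono order_trans le_infI)
    then show "inf a b \<in> {x. \<exists>g\<in>G. inf g c \<le> x}" using assms(2)[OF g(1) h(1)] by auto }
  { assume "a \<le> b" then show "b \<in> {x. \<exists>g\<in>G. inf g c \<le> x}" using g by (auto intro: order_trans) }
qed

lemma ultrafilter_extends_filter:
  fixes F :: "'a::boolean_algebra set"
  assumes "proper_filter F"
  shows "\<exists>U. ultrafilter U \<and> F \<subseteq> U"
proof -
  let ?A = "{G. proper_filter G \<and> F \<subseteq> G}"
  have "\<exists>M\<in>?A. \<forall>X\<in>?A. M \<subseteq> X \<longrightarrow> X = M"
  proof (rule subset_Zorn_nonempty)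
    show "?A \<noteq> {}" using assms by auto
    fix C assume C: "C \<noteq> {}" "subset.chain ?A C"
    have sub: "C \<subseteq> ?A" and chain: "\<And>X Y. X \<in> C \<Longrightarrow> Y \<in> C \<Longrightarrow> X \<subseteq> Y \<or> Y \<subseteq> X"
      using C(2) unfolding subset.chain_def by blast+
    have "proper_filter (\<Union>C)"
      unfolding proper_filter_def
    proof (intro conjI ballI allI impI)
      show "top \<in> \<Union>C" using C(1) sub by (auto simp: proper_filter_def)
      show "bot \<notin> \<Union>C" using sub by (auto simp: proper_filter_def)
      fix a b assume a: "a \<in> \<Union>C"
      { assume "b \<in> \<Union>C"
        with a obtain X Y where "X \<in> C" "Y \<in> C" "a \<in> X" "b \<in> Y" by auto
        then show "inf a b \<in> \<Union>C" using chain[of X Y] sub unfolding proper_filter_def by blast }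
      { assume "a \<le> b" then show "b \<in> \<Union>C" using a sub unfolding proper_filter_def by blast }
    qed
    then show "\<Union>C \<in> ?A" using C(1) sub by auto
  qed
  then obtain M where "proper_filter M" "F \<subseteq> M"
      "\<And>X. proper_filter X \<Longrightarrow> F \<subseteq> X \<Longrightarrow> M \<subseteq> X \<Longrightarrow> X = M"
    by auto
  then show ?thesis unfolding ultrafilter_def by blast
qed

lemma ultrafilter_containing:
  fixes G :: "'a::boolean_algebra set"
  assumes "G \<noteq> {}" "\<And>g h. g \<in> G \<Longrightarrow> h \<in> G \<Longrightarrow> inf g h \<in> G"
    "\<And>g. g \<in> G \<Longrightarrow> inf g c \<noteq> bot"
  shows "\<exists>U. ultrafilter U \<and> G \<subseteq> U \<and> c \<in> U"
proof -
  obtain U where U: "ultrafilter U" "{x. \<exists>g\<in>G. inf g c \<le> x} \<subseteq> U"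
    using ultrafilter_extends_filter[OF proper_filter_generated[OF assms]] by blast
  have "G \<subseteq> U" using U(2) by (auto intro: inf.cobounded1)
  moreover have "c \<in> U" using U(2) assms(1) by (auto intro: inf.cobounded2)
  ultimately show ?thesis using U by blast
qed

lemma ultrafilter_compl_iff:
  fixes U :: "'a::boolean_algebra set"
  assumes "ultrafilter U"
  shows "- a \<in> U \<longleftrightarrow> a \<notin> U"
proof
  have filter: "proper_filter U" using assms by (simp add: ultrafilter_def)
  show "- a \<in> U \<Longrightarrow> a \<notin> U"
  proof
    assume "- a \<in> U" "a \<in> U"
    then have "inf (- a) a \<in> U" using filter unfolding proper_filter_def by blast
    then show False using filter unfolding proper_filter_def by simp
  qed
  assume a_notin: "a \<notin> U"
  show "- a \<in> U"
  proof (cases "\<forall>g\<in>U. inf g a \<noteq> bot")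
    case True
    (* U together with a generates a proper filter, which by maximality is U itself. *)
    have "U \<noteq> {}" and "\<And>g h. g \<in> U \<Longrightarrow> h \<in> U \<Longrightarrow> inf g h \<in> U"
      using filter by (auto simp: proper_filter_def)
    then have "proper_filter {x. \<exists>g\<in>U. inf g a \<le> x}"
      using True by (intro proper_filter_generated) auto
    moreover have "U \<subseteq> {x. \<exists>g\<in>U. inf g a \<le> x}" by (auto intro: inf.cobounded1)
    ultimately have "{x. \<exists>g\<in>U. inf g a \<le> x} = U" using assms unfolding ultrafilter_def by blast
    moreover have "a \<in> {x. \<exists>g\<in>U. inf g a \<le> x}" using \<open>U \<noteq> {}\<close> by (auto intro: inf.cobounded2)
    ultimately show ?thesis using a_notin by blast
  next
    case False
    then obtain g where "g \<in> U" "inf g a = bot" by auto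
    then have "g \<le> - a" using shunt1[of g a bot] by simp
    then show ?thesis using \<open>g \<in> U\<close> filter by (auto simp: proper_filter_def)
  qed
qed

text \<open>If r is outside the subalgebra B generated by S, some ultrafilter contains r and no
  element of B below r (the complements of those elements all meet r).\<close>
lemma ultrafilter_avoiding_below:
  fixes r :: "'a::boolean_algebra"
  assumes "r \<notin> subalg_gen S"
  shows "\<exists>u. ultrafilter u \<and> r \<in> u \<and> (\<forall>b\<in>subalg_gen S. b \<le> r \<longrightarrow> - b \<in> u)"
proof -
  let ?G = "{- b | b. b \<in> subalg_gen S \<and> b \<le> r}"
  have "\<exists>u. ultrafilter u \<and> ?G \<subseteq> u \<and> r \<in> u"
  proof (rule ultrafilter_containing)
    show "?G \<noteq> {}" using subalg_gen.bot[of S] by auto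
    fix g h assume "g \<in> ?G" "h \<in> ?G"
    then obtain b c where "g = - b" "h = - c" "b \<in> subalg_gen S" "c \<in> subalg_gen S" "b \<le> r" "c \<le> r"
      by auto
    then show "inf g h \<in> ?G" by (intro CollectI exI[of _ "sup b c"]) (auto intro: subalg_gen.sup)
  next
    fix g assume "g \<in> ?G"
    then obtain b where b: "g = - b" "b \<in> subalg_gen S" "b \<le> r" by auto
    show "inf g r \<noteq> bot"
    proof
      assume "inf g r = bot"
      then have "r \<le> b" using b shunt2[of r b bot] by (simp add: inf_commute)
      then show False using b assms by (simp add: antisym)
    qed
  qed
  then show ?thesis by blast
qed

text \<open>The second ultrafilter extends the trace of the first on
  the subalgebra together with -r.\<close>
lemma ultrafilters_separating:
  fixes r :: "'a::boolean_algebra"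
  assumes "r \<notin> subalg_gen S"
  shows "\<exists>u v. ultrafilter u \<and> ultrafilter v \<and> r \<in> u \<and> r \<notin> v \<and> (\<forall>s\<in>S. s \<in> u \<longleftrightarrow> s \<in> v)"
proof -
  let ?B = "subalg_gen S"
  obtain u where u: "ultrafilter u" "r \<in> u" "\<And>b. b \<in> ?B \<Longrightarrow> b \<le> r \<Longrightarrow> - b \<in> u"
    using ultrafilter_avoiding_below[OF assms] by blast
  have filter_u: "proper_filter u" using u(1) by (simp add: ultrafilter_def)
  have "\<exists>v. ultrafilter v \<and> u \<inter> ?B \<subseteq> v \<and> - r \<in> v"
  proof (rule ultrafilter_containing)
    show "u \<inter> ?B \<noteq> {}" using filter_u subalg_gen.top[of S] by (auto simp: proper_filter_def)
    fix g h assume "g \<in> u \<inter> ?B" "h \<in> u \<inter> ?B"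
    then show "inf g h \<in> u \<inter> ?B" using filter_u by (auto simp: proper_filter_def intro: subalg_gen.inf)
  next
    fix g assume g: "g \<in> u \<inter> ?B"
    show "inf g (- r) \<noteq> bot"
    proof
      assume "inf g (- r) = bot"
      then have "g \<le> r" using shunt2[of g r bot] by simp
      then show False using g u(3) ultrafilter_compl_iff[OF u(1), of g] by blast
    qed
  qed
  then obtain v where v: "ultrafilter v" "u \<inter> ?B \<subseteq> v" "- r \<in> v" by blast
  have "s \<in> u \<longleftrightarrow> s \<in> v" if "s \<in> S" for s
  proof -
    have "s \<in> ?B" "- s \<in> ?B" using that by (auto intro: subalg_gen.base subalg_gen.compl)
    then show ?thesis
      using v(2) ultrafilter_compl_iff[OF u(1), of s] ultrafilter_compl_iff[OF v(1), of s] by blast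
  qed
  moreover have "r \<notin> v" using v ultrafilter_compl_iff[OF v(1), of r] by blast
  ultimately show ?thesis using u v by blast
qed

lemma stone_space_topspace:
  "topspace (stone_space :: 'a::boolean_algebra set topology) = {u. ultrafilter u}"
  unfolding stone_space_def topology_generated_by_topspace
proof (intro equalityI subsetI)
  fix u :: "'a set" assume "u \<in> {u. ultrafilter u}"
  then have "u \<in> {u. ultrafilter u \<and> top \<in> u}" by (auto simp: ultrafilter_def proper_filter_def)
  then show "u \<in> \<Union> {{u. ultrafilter u \<and> a \<in> u} | a. True}" by blast
qed auto

lemma stone_space_basic_open:
  "openin (stone_space :: 'a::boolean_algebra set topology) {u. ultrafilter u \<and> a \<in> u}"
  unfolding stone_space_def by (rule topology_generated_by_Basis) blast

text \<open>[r] is clopen (its complement is [-r]), so its indicator function is continuous.\<close>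
lemma stone_space_indicator_continuous:
  "continuous_map (stone_space :: 'a::boolean_algebra set topology) euclideanreal
     (\<lambda>u. if r \<in> u then 1 else 0)"
  unfolding continuous_map_def
proof (intro conjI allI impI)
  show "(\<lambda>u. if r \<in> u then 1 else 0) \<in> topspace stone_space \<rightarrow> topspace euclideanreal" by simp
  fix V :: "real set"
  have "{u \<in> topspace stone_space. (if r \<in> u then 1 else 0) \<in> V} =
      (if (1::real) \<in> V then {u. ultrafilter u \<and> r \<in> u} else {})
      \<union> (if (0::real) \<in> V then {u. ultrafilter u \<and> - r \<in> u} else {})"
    by (auto simp: stone_space_topspace ultrafilter_compl_iff)
  then show "openin stone_space {u \<in> topspace stone_space. (if r \<in> u then 1 else 0) \<in> V}"
    by (auto intro: stone_space_basic_open)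
qed

lemma irredundant_nice_biort:
  fixes R :: "'a::boolean_algebra set"
  assumes "irredundant R"
  shows "\<exists>p. inj_on p R \<and> nbiort_index (stone_space :: 'a set topology) (p ` R)"
proof -
  have "\<exists>uv. ultrafilter (fst uv) \<and> ultrafilter (snd uv) \<and> r \<in> fst uv \<and> r \<notin> snd uv
          \<and> (\<forall>s\<in>R - {r}. s \<in> fst uv \<longleftrightarrow> s \<in> snd uv)" if "r \<in> R" for r
    using ultrafilters_separating[of r "R - {r}"] assms that
    by (fastforce simp: irredundant_def)
  then obtain p where p: "\<And>r. r \<in> R \<Longrightarrow> ultrafilter (fst (p r)) \<and> ultrafilter (snd (p r))
          \<and> r \<in> fst (p r) \<and> r \<notin> snd (p r) \<and> (\<forall>s\<in>R - {r}. s \<in> fst (p r) \<longleftrightarrow> s \<in> snd (p r))"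
    by metis
  have inj: "inj_on p R"
  proof
    fix r s assume rs: "r \<in> R" "s \<in> R" "p r = p s"
    show "r = s"
    proof (rule ccontr)
      assume "r \<noteq> s"
      then have "r \<in> fst (p s) \<longleftrightarrow> r \<in> snd (p s)" using p[OF rs(2)] rs(1) by blast
      then show False using p[OF rs(1)] rs(3) by metis
    qed
  qed
  define f where "f = (\<lambda>q (u::'a set). if inv_into R p q \<in> u then (1::real) else 0)"
  have "nice_biort stone_space (p ` R) f fst snd"
    unfolding nice_biort_def
  proof (intro ballI conjI impI)
    fix \<alpha> assume "\<alpha> \<in> p ` R"
    then obtain r where r: "r \<in> R" "\<alpha> = p r" by auto
    have index: "inv_into R p \<alpha> = r" using r inj by simp
    show "continuous_map stone_space euclideanreal (f \<alpha>)"
      unfolding f_def index by (rule stone_space_indicator_continuous)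
    show "fst \<alpha> \<in> topspace stone_space" "snd \<alpha> \<in> topspace stone_space"
      using p[OF r(1)] r(2) by (auto simp: stone_space_topspace)
    show "f \<alpha> (fst \<alpha>) - f \<alpha> (snd \<alpha>) = 1" using p[OF r(1)] r(2) index by (simp add: f_def)
    fix \<beta> assume "\<beta> \<in> p ` R" "\<beta> \<noteq> \<alpha>"
    then obtain s where s: "s \<in> R" "\<beta> = p s" "s \<noteq> r" using r by auto
    have "r \<in> fst (p s) \<longleftrightarrow> r \<in> snd (p s)" using p[OF s(1)] s(3) r(1) by blast
    then show "f \<alpha> (fst \<beta>) - f \<alpha> (snd \<beta>) = 0" using s(2) index by (simp add: f_def)
  qed
  then show ?thesis using inj unfolding nbiort_index_def by blast
qed

lemma nice_biortD:
  assumes "nice_biort X I f x y" "a \<in> I"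
  shows "continuous_map X euclideanreal (f a)" "x a \<in> topspace X" "y a \<in> topspace X"
    "f a (x a) - f a (y a) = 1" "\<And>b. b \<in> I \<Longrightarrow> b \<noteq> a \<Longrightarrow> f a (x b) - f a (y b) = 0"
  using assms unfolding nice_biort_def by blast+

lemma nice_biort_pairs_inj:
  assumes "nice_biort X I f x y"
  shows "inj_on (\<lambda>a. (x a, y a)) I"
proof
  fix a b assume ab: "a \<in> I" "b \<in> I" "(x a, y a) = (x b, y b)"
  show "a = b"
  proof (rule ccontr)
    assume "a \<noteq> b"
    then have "f a (x b) - f a (y b) = 0" using nice_biortD(5)[OF assms ab(1) ab(2)] by blast
    then show False using nice_biortD(4)[OF assms ab(1)] ab(3) by simp
  qed
qed

text \<open>The pairs form a discrete subspace of X x X: the open set where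
  f_a(s) - f_a(t) > 1/2 meets them only in (x_a, y_a).\<close>
lemma nice_biort_pairs_discrete:
  assumes "nice_biort X I f x y"
  shows "discrete_subspace (prod_topology X X) ((\<lambda>a. (x a, y a)) ` I)"
proof -
  let ?D = "(\<lambda>a. (x a, y a)) ` I"
  have sub: "?D \<subseteq> topspace (prod_topology X X)" using nice_biortD(2,3)[OF assms] by auto
  have "openin (subtopology (prod_topology X X) ?D) {(x a, y a)}" if a: "a \<in> I" for a
  proof -
    have cont: "continuous_map X euclideanreal (f a)" using nice_biortD(1)[OF assms a] .
    have "continuous_map (prod_topology X X) euclideanreal (\<lambda>z. f a (fst z) - f a (snd z))"
      by (intro continuous_map_diff continuous_map_compose[OF continuous_map_fst cont, unfolded o_def]
          continuous_map_compose[OF continuous_map_snd cont, unfolded o_def])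
    then have "openin (prod_topology X X)
        {z \<in> topspace (prod_topology X X). f a (fst z) - f a (snd z) \<in> {1/2<..}}" (is "openin _ ?T")
      by (rule openin_continuous_map_preimage) simp
    moreover have "{(x a, y a)} = ?T \<inter> ?D"
      using sub a nice_biortD(4)[OF assms a] nice_biortD(5)[OF assms a] by fastforce
    ultimately show ?thesis unfolding openin_subtopology by blast
  qed
  then have "discrete_topology ?D = subtopology (prod_topology X X) ?D"
    unfolding discrete_topology_unique_alt by auto
  then show ?thesis unfolding discrete_subspace_def using sub by simp
qed

theorem mainTheorem15:
  fixes X :: "'b topology"
  assumes "infinite (UNIV :: 'a::boolean_algebra set)"
    and "compact_space X" and "Hausdorff_space X" and "infinite (topspace X)"
  shows "card_sup_le (irredundant :: 'a set \<Rightarrow> bool) (nbiort_index (stone_space :: 'a set topology))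
       \<and> card_sup_le (nbiort_index X) (discrete_subspace (prod_topology X X))"
proof
  show "card_sup_le (irredundant :: 'a set \<Rightarrow> bool) (nbiort_index (stone_space :: 'a set topology))"
    by (rule card_sup_le_by_injection) (rule irredundant_nice_biort)
  show "card_sup_le (nbiort_index X) (discrete_subspace (prod_topology X X))"
  proof (rule card_sup_le_by_injection)
    fix I assume "nbiort_index X I"
    then obtain f x y where "nice_biort X I f x y" unfolding nbiort_index_def by blast
    then show "\<exists>p. inj_on p I \<and> discrete_subspace (prod_topology X X) (p ` I)"
      using nice_biort_pairs_inj nice_biort_pairs_discrete by blast
  qed
qed

end
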